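(* Let $P=(N,L)$ and $P'=(N',L')$ be filtration pairs for an isolated invariant set $S$. Suppose $r,s$ define a standard shift equivalence of lag $m$ from $f_P:N_L\to N_L$ to $f_{P'}:N'_{L'}\to N'_{L'}$ with semi-lags $k$ and $m-k$ respectively, and suppose $r',s'$ define another standard shift equivalence between $f_P$ and $f_{P'}$ with the same semi-lags $k$ and $m-k$. Then $r\circ f_P^m=r'\circ f_P^m$ and $s\circ f_{P'}^m=s'\circ f_{P'}^m$.
   Context: Let $X$ be a locally compact metric space, $U\subset X$ open and $f:U\to X$ continuous. A solution through $x$ is a map $\sigma:\mathbb Z\to U$ with $\sigma(0)=x$ and $f(\sigma(n))=\sigma(n+1)$ for all $n$; for $N\subset U$, $\operatorname{Inv}N$ is the set of $x\in N$ admitting a solution through $x$ with values in $N$. A compact $N\subset U$ is an isolating neighborhood if $\operatorname{Inv}N\subset\operatorname{Int}N$; $S$ is an isolated invariant set if $S=\operatorname{Inv}N$ for some isolating neighborhood $N$. The exit set is $N^-=\{x\in N:f(x)\notin\operatorname{Int}N\}$. A filtration pair for $S$ is a pair of compact sets $L\subset N$ in the interior of the domain of $f$, each the closure of its interior, with (1) $\operatorname{cl}(N\setminus L)$ an isolating neighborhood and $\operatorname{Inv}\operatorname{cl}(N\setminus L)=S$; (2) $L$ a neighborhood of $N^-$ in $N$; (3) $f(L)\cap\operatorname{cl}(N\setminus L)=\emptyset$. For a filtration pair $P=(N,L)$, $N_L=N/L$ with $L$ collapsed to the base point $[L]$ (if $L=\emptyset$, a disjoint point $[L]$ is adjoined),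 $p:N\to N_L$ the quotient map (and similarly $p':N'\to N'_{L'}$), and $f_P:N_L\to N_L$ is $f_P([L])=[L]$, $f_P(p(x))=p(f(x))$ for $x\in N\setminus L$. Continuous base-point preserving maps $r:N_L\to N'_{L'}$, $s:N'_{L'}\to N_L$ define a shift equivalence of lag $m\in\mathbb Z^+$ if $r\circ f_P=f_{P'}\circ r$, $s\circ f_{P'}=f_P\circ s$, $s\circ r=f_P^m$ and $r\circ s=f_{P'}^m$. It is a standard shift equivalence if there is an integer $0\le k\le m$ (the semi-lag of $r$) such that for every $x\in N\setminus L$ either $f^k(x)\in N'\setminus L'$ and $r(x)=p'(f^k(x))$, or $r(x)=[L']$; and analogously, for every $y\in N'\setminus L'$, either $f^{m-k}(y)\in N\setminus L$ and $s(y)=p(f^{m-k}(y))$, or $s(y)=[L]$ (so $s$ has semi-lag $m-k$). Here points of $N\setminus L$ are identified with their images in $N_L$. *)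

theory Defs
  imports "HOL-Analysis.Analysis"
begin

text \<open>Dynamics of a continuous map f : U -> X, X the ambient metric space (a type).
  Only the values of f on U are relevant.\<close>

definition Inv :: "('a \<Rightarrow> 'a) \<Rightarrow> 'a set \<Rightarrow> 'a set" where
  "Inv f N = {x \<in> N. \<exists>\<sigma>::int \<Rightarrow> 'a. \<sigma> 0 = x \<and> (\<forall>n. \<sigma> n \<in> N \<and> f (\<sigma> n) = \<sigma> (n + 1))}"

definition isolating_nbhd :: "('a::topological_space \<Rightarrow> 'a) \<Rightarrow> 'a set \<Rightarrow> 'a set \<Rightarrow> bool" where
  "isolating_nbhd f U N \<longleftrightarrow> compact N \<and> N \<subseteq> U \<and> Inv f N \<subseteq> interior N"

definition isolated_invariant_set :: "('a::topological_space \<Rightarrow> 'a) \<Rightarrow> 'a set \<Rightarrow> 'a set \<Rightarrow> bool" where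
  "isolated_invariant_set f U S \<longleftrightarrow> (\<exists>N. isolating_nbhd f U N \<and> S = Inv f N)"

definition exit_set :: "('a::topological_space \<Rightarrow> 'a) \<Rightarrow> 'a set \<Rightarrow> 'a set" where
  "exit_set f N = {x \<in> N. f x \<notin> interior N}"

definition filtration_pair ::
  "('a::topological_space \<Rightarrow> 'a) \<Rightarrow> 'a set \<Rightarrow> 'a set \<Rightarrow> 'a set \<Rightarrow> 'a set \<Rightarrow> bool" where
  "filtration_pair f U S N L \<longleftrightarrow>
     compact N \<and> compact L \<and> L \<subseteq> N \<and> N \<subseteq> interior U \<and>
     N = closure (interior N) \<and> L = closure (interior L) \<and>
     isolating_nbhd f U (closure (N - L)) \<and> Inv f (closure (N - L)) = S \<and>
     (\<exists>V. open V \<and> exit_set f N \<subseteq> V \<and> V \<inter> N \<subseteq> L) \<and>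
     f ` L \<inter> closure (N - L) = {}"

text \<open>The pointed quotient space N/L: the base point [L] is None, a point
  x of N - L is represented by Some x.  If L is empty, None is an adjoined point.\<close>

definition qspace :: "'a set \<Rightarrow> 'a set \<Rightarrow> 'a option set" where
  "qspace N L = insert None (Some ` (N - L))"

definition qproj :: "'a set \<Rightarrow> 'a \<Rightarrow> 'a option" where
  "qproj L x = (if x \<in> L then None else Some x)"

definition quot_top :: "'a::topological_space set \<Rightarrow> 'a set \<Rightarrow> 'a option topology" where
  "quot_top N L = topology (\<lambda>V. V \<subseteq> qspace N L \<and>
       openin (top_of_set N) {x \<in> N. qproj L x \<in> V})"

lemma istopology_quot_top:
  "istopology (\<lambda>V. V \<subseteq> qspace N L \<and> openin (top_of_set N) {x \<in> N. qproj L x \<in> V})"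
proof -
  have int: "{x \<in> N. qproj L x \<in> S \<inter> T} = {x \<in> N. qproj L x \<in> S} \<inter> {x \<in> N. qproj L x \<in> T}"
    for S T by auto
  have un: "{x \<in> N. qproj L x \<in> \<Union>K} = \<Union>((\<lambda>S. {x \<in> N. qproj L x \<in> S}) ` K)" for K
    by auto
  have A: "openin (top_of_set N) {x \<in> N. qproj L x \<in> S \<inter> T}"
    if "openin (top_of_set N) {x \<in> N. qproj L x \<in> S}"
       "openin (top_of_set N) {x \<in> N. qproj L x \<in> T}" for S T
    unfolding int using that by (rule openin_Int)
  have B: "openin (top_of_set N) {x \<in> N. qproj L x \<in> \<Union>K}"
    if "\<forall>S\<in>K. openin (top_of_set N) {x \<in> N. qproj L x \<in> S}" for K
    unfolding un using that by (intro openin_Union) auto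
  show ?thesis
    unfolding istopology_def
  proof (rule conjI; intro allI impI)
    fix S T assume "S \<subseteq> qspace N L \<and> openin (top_of_set N) {x \<in> N. qproj L x \<in> S}"
      and "T \<subseteq> qspace N L \<and> openin (top_of_set N) {x \<in> N. qproj L x \<in> T}"
    then show "S \<inter> T \<subseteq> qspace N L \<and> openin (top_of_set N) {x \<in> N. qproj L x \<in> S \<inter> T}"
      using A[of S T] by blast
  next
    fix K assume "\<forall>S\<in>K. S \<subseteq> qspace N L \<and> openin (top_of_set N) {x \<in> N. qproj L x \<in> S}"
    then show "\<Union>K \<subseteq> qspace N L \<and> openin (top_of_set N) {x \<in> N. qproj L x \<in> \<Union>K}"
      using B[of K] by blast
  qed
qed

definition fP :: "('a \<Rightarrow> 'a) \<Rightarrow> 'a set \<Rightarrow> 'a option \<Rightarrow> 'a option" where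
  "fP f L z = (case z of None \<Rightarrow> None | Some x \<Rightarrow> qproj L (f x))"

definition iter_defined :: "('a \<Rightarrow> 'a) \<Rightarrow> 'a set \<Rightarrow> nat \<Rightarrow> 'a \<Rightarrow> bool" where
  "iter_defined f U k x \<longleftrightarrow> (\<forall>j<k. (f ^^ j) x \<in> U)"

definition shift_equivalence ::
  "('a::topological_space \<Rightarrow> 'a) \<Rightarrow> 'a set \<Rightarrow> 'a set \<Rightarrow> 'a set \<Rightarrow> 'a set
   \<Rightarrow> ('a option \<Rightarrow> 'a option) \<Rightarrow> ('a option \<Rightarrow> 'a option) \<Rightarrow> nat \<Rightarrow> bool" where
  "shift_equivalence f N L N' L' r s m \<longleftrightarrow>
     continuous_map (quot_top N L) (quot_top N' L') r \<and> r None = None \<and>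
     continuous_map (quot_top N' L') (quot_top N L) s \<and> s None = None \<and>
     (\<forall>z\<in>qspace N L. r (fP f L z) = fP f L' (r z)) \<and>
     (\<forall>z\<in>qspace N' L'. s (fP f L' z) = fP f L (s z)) \<and>
     (\<forall>z\<in>qspace N L. s (r z) = (fP f L ^^ m) z) \<and>
     (\<forall>z\<in>qspace N' L'. r (s z) = (fP f L' ^^ m) z)"

definition standard_shift_equivalence ::
  "('a::topological_space \<Rightarrow> 'a) \<Rightarrow> 'a set \<Rightarrow> 'a set \<Rightarrow> 'a set \<Rightarrow> 'a set \<Rightarrow> 'a set
   \<Rightarrow> ('a option \<Rightarrow> 'a option) \<Rightarrow> ('a option \<Rightarrow> 'a option) \<Rightarrow> nat \<Rightarrow> nat \<Rightarrow> bool" where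
  "standard_shift_equivalence f U N L N' L' r s m k \<longleftrightarrow>
     shift_equivalence f N L N' L' r s m \<and> k \<le> m \<and>
     (\<forall>x\<in>N - L. (iter_defined f U k x \<and> (f ^^ k) x \<in> N' - L' \<and>
                   r (Some x) = qproj L' ((f ^^ k) x)) \<or> r (Some x) = None) \<and>
     (\<forall>y\<in>N' - L'. (iter_defined f U (m - k) y \<and> (f ^^ (m - k)) y \<in> N - L \<and>
                   s (Some y) = qproj L ((f ^^ (m - k)) y)) \<or> s (Some y) = None)"

end

theory Submission
  imports Defs
begin

text \<open>If z is a point of N/L with f_P^m z \<noteq> [L], then s (r z) = f_P^m z forces
  r z \<noteq> [L'], and by the semi-lag condition r z and r' z are then both p'(f^k z).
  Since r and r' conjugate f_P to f_P', they agree on f_P^m z as well.  If instead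
  f_P^m z = [L], both maps send it to the base point.  The statement for s, s' is the
  same argument for the reversed shift equivalences.\<close>

lemma funpow_in_invariant_set:
  assumes "\<forall>z\<in>Q. F z \<in> Q" and "z \<in> Q"
  shows "(F ^^ n) z \<in> Q"
  using assms by (induction n) auto

lemma funpow_intertwined:
  assumes "\<forall>z\<in>Q. F z \<in> Q" and "\<forall>z\<in>Q. r (F z) = G (r z)" and "z \<in> Q"
  shows "r ((F ^^ n) z) = (G ^^ n) (r z)"
  using assms by (induction n) (auto simp: funpow_in_invariant_set)

lemma intertwining_maps_agree_after_lag:
  assumes F_Q: "\<forall>z\<in>Q. F z \<in> Q"
    and r_comm: "\<forall>z\<in>Q. r (F z) = G (r z)" and r'_comm: "\<forall>z\<in>Q. r' (F z) = G (r' z)"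
    and sr: "\<forall>z\<in>Q. s (r z) = (F ^^ m) z" and s'r': "\<forall>z\<in>Q. s' (r' z) = (F ^^ m) z"
    and base: "r b = b'" "r' b = b'" "s b' = b" "s' b' = b"
    and r_semilag: "\<forall>z\<in>Q. r z = v z \<or> r z = b'"
    and r'_semilag: "\<forall>z\<in>Q. r' z = v z \<or> r' z = b'"
    and z: "z \<in> Q"
  shows "r ((F ^^ m) z) = r' ((F ^^ m) z)"
proof (cases "(F ^^ m) z = b")
  case True
  then show ?thesis using base by simp
next
  case False
  then have "r z \<noteq> b'" "r' z \<noteq> b'"
    using sr s'r' base z by auto
  then have "r z = r' z"
    using r_semilag r'_semilag z by metis
  then show ?thesis
    using funpow_intertwined[OF F_Q r_comm z] funpow_intertwined[OF F_Q r'_comm z] by simp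
qed

lemma exit_set_subset_if_filtration_pair:
  assumes "filtration_pair f U S N L"
  shows "exit_set f N \<subseteq> L"
proof -
  obtain V where "exit_set f N \<subseteq> V" "V \<inter> N \<subseteq> L"
    using assms unfolding filtration_pair_def by blast
  then show ?thesis
    unfolding exit_set_def by blast
qed

lemma fP_maps_qspace:
  assumes "exit_set f N \<subseteq> L" and "z \<in> qspace N L"
  shows "fP f L z \<in> qspace N L"
proof (cases z)
  case (Some x)
  with assms have "f x \<in> interior N"
    by (auto simp: qspace_def exit_set_def)
  then have "f x \<in> N"
    using interior_subset by blast
  then show ?thesis
    using Some by (auto simp: fP_def qspace_def qproj_def)
qed (simp add: fP_def qspace_def)

lemma standard_shift_equivalence_swap:
  assumes "standard_shift_equivalence f U N L N' L' r s m k"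
  shows "standard_shift_equivalence f U N' L' N L s r m (m - k)"
  using assms unfolding standard_shift_equivalence_def shift_equivalence_def
  by (simp add: diff_diff_cancel)

lemma standard_shift_equivalenceD:
  assumes "standard_shift_equivalence f U N L N' L' r s m k"
  shows "r None = None" and "s None = None"
    and "\<forall>z\<in>qspace N L. r (fP f L z) = fP f L' (r z)"
    and "\<forall>z\<in>qspace N L. s (r z) = (fP f L ^^ m) z"
    and "\<forall>z\<in>qspace N L. r z = case_option None (qproj L' \<circ> (f ^^ k)) z \<or> r z = None"
proof -
  note se = assms[unfolded standard_shift_equivalence_def shift_equivalence_def]
  then show "r None = None" "s None = None"
    and "\<forall>z\<in>qspace N L. r (fP f L z) = fP f L' (r z)"
    and "\<forall>z\<in>qspace N L. s (r z) = (fP f L ^^ m) z"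
    by blast+
  show "\<forall>z\<in>qspace N L. r z = case_option None (qproj L' \<circ> (f ^^ k)) z \<or> r z = None"
    using se by (auto simp: qspace_def)
qed

lemma standard_shift_equivalences_agree_after_lag:
  assumes "exit_set f N \<subseteq> L"
    and rs: "standard_shift_equivalence f U N L N' L' r s m k"
    and r's': "standard_shift_equivalence f U N L N' L' r' s' m k"
  shows "\<forall>z\<in>qspace N L. r ((fP f L ^^ m) z) = r' ((fP f L ^^ m) z)"
proof
  fix z assume z: "z \<in> qspace N L"
  have F_Q: "\<forall>z\<in>qspace N L. fP f L z \<in> qspace N L"
    using fP_maps_qspace[OF assms(1)] by blast
  note rsD = standard_shift_equivalenceD[OF rs] and r's'D = standard_shift_equivalenceD[OF r's']
  show "r ((fP f L ^^ m) z) = r' ((fP f L ^^ m) z)"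
    by (rule intertwining_maps_agree_after_lag[OF F_Q rsD(3) r's'D(3) rsD(4) r's'D(4)
          rsD(1) r's'D(1) rsD(2) r's'D(2) rsD(5) r's'D(5) z])
qed

theorem mainTheorem20:
  fixes f :: "'a::metric_space \<Rightarrow> 'a"
    and U S N L N' L' :: "'a set"
    and r s r' s' :: "'a option \<Rightarrow> 'a option"
    and m k :: nat
  assumes "locally_compact_space (euclidean :: 'a topology)"
    and "open U" and "continuous_on U f"
    and "isolated_invariant_set f U S"
    and "filtration_pair f U S N L" and "filtration_pair f U S N' L'"
    and "standard_shift_equivalence f U N L N' L' r s m k"
    and "standard_shift_equivalence f U N L N' L' r' s' m k"
  shows "(\<forall>z\<in>qspace N L. r ((fP f L ^^ m) z) = r' ((fP f L ^^ m) z)) \<and>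
         (\<forall>z\<in>qspace N' L'. s ((fP f L' ^^ m) z) = s' ((fP f L' ^^ m) z))"
proof
  show "\<forall>z\<in>qspace N L. r ((fP f L ^^ m) z) = r' ((fP f L ^^ m) z)"
    using exit_set_subset_if_filtration_pair[OF assms(5)] assms(7,8)
    by (rule standard_shift_equivalences_agree_after_lag)
  show "\<forall>z\<in>qspace N' L'. s ((fP f L' ^^ m) z) = s' ((fP f L' ^^ m) z)"
    using exit_set_subset_if_filtration_pair[OF assms(6)]
      standard_shift_equivalence_swap[OF assms(7)] standard_shift_equivalence_swap[OF assms(8)]
    by (rule standard_shift_equivalences_agree_after_lag)
qed

end
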